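(* Assume $\alpha_i\ge T_G$ and $K_i>C_G$ for $i=1,2$. For the layer clock (Algorithm SS-DC, described in the context), with arbitrary predicates $cond,cond_1$ and procedures $Initialization$, $Computation$ (not modifying $r_1,r_2$), every maximal execution starting from a configuration satisfying $WU$ is infinite, and in it every process executes action $NA$ — and hence increments its master clock $r_1$ — infinitely often.
   Context: $G=(V,E)$ is a finite connected undirected graph, $\mathcal N_p$ the neighbors of $p$. $T_G$ is the length of a longest chordless cycle of $G$ if $G$ has a cycle, and $2$ otherwise. $C_G$ is the minimum, over all cycle bases of $G$, of the length of a longest cycle in the basis (taken as $2$ if $G$ is acyclic). For $i\in\{1,2\}$, fix integers $\alpha_i\ge1$, $K_i\ge3$; $tail_i=\{-\alpha_i,\dots,0\}$, $tail^*_i=tail_i\setminus\{0\}$, $ring_i=\{0,\dots,K_i-1\}$, $\chi_i=tail_i\cup ring_i$, and $\varphi_i(x)=(x+1)\bmod K_i$ if $x\ge0$, $\varphi_i(x)=x+1$ if $x<0$. Fix an integer $\varrho\ge1$. Each process $p$ has registers $p.r_1\in\chi_1$, $p.r_2\in\chi_2$ and possibly other registers. Predicates at $p$, for $i=1,2$: $ConvergenceStep^i_p\equiv p.r_i\in tail^*_i\wedge\forall q\in\mathcal N_p:(q.r_i\in tail_i\wedge p.r_i\le q.r_i)$; $LocallyCorrect^i_p\equiv p.r_i\in ring_i\wedge\forall q\in\mathcal N_p:(q.r_i\in ring_i\wedge(p.r_i=q.r_i\vee p.r_i=\varphi_i(q.r_i)\vee\varphi_i(p.r_i)=q.r_i))$;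 $NormalStep^i_p\equiv p.r_i\in ring_i\wedge\forall q\in\mathcal N_p:(q.r_i=p.r_i\vee q.r_i=\varphi_i(p.r_i))$; $ResetInit^i_p\equiv\neg LocallyCorrect^i_p\wedge p.r_i\notin tail_i$; $NormalStep_p\equiv NormalStep^1_p\wedge LocallyCorrect^2_p$. Actions of $p$ (each executed atomically): $NA$: if $NormalStep_p$ then { if $p.r_1\equiv\varrho-1\pmod\varrho$ then { if $NormalStep^2_p\wedge cond$ then (if $cond_1$ then $p.r_2:=\varphi_2(p.r_2)$); execute $Initialization$ } else execute $Computation$; $p.r_1:=\varphi_1(p.r_1)$ }. For $i=1,2$: $CA_i$: if $ConvergenceStep^i_p$ then $p.r_i:=\varphi_i(p.r_i)$; $RA_i$: if $ResetInit^i_p$ then $p.r_i:=-\alpha_i$. Here $cond,cond_1$ are arbitrary predicates and $Initialization,Computation$ arbitrary procedures that only modify registers of $p$ other than $r_1,r_2$. Daemon: in each step a nonempty subset of processes having an enabled action is chosen (possibly unfairly), each executes one enabled action; a maximal execution is infinite or ends in a configuration with no enabled process. $WU_i$ holds iff for all $p$, $p.r_i\in ring_i$, and for every edge $\{p,q\}$, $\min((p.r_i-q.r_i)\bmod K_i,(q.r_i-p.r_i)\bmod K_i)\le1$. $WU=WU_1\wedge WU_2$. *)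

theory Defs
  imports Main
begin

text \<open>The graph is given by a symmetric irreflexive adjacency relation E on the
  finite vertex type 'v (all elements of 'v are vertices).\<close>

definition is_cycle :: "('v \<Rightarrow> 'v \<Rightarrow> bool) \<Rightarrow> 'v list \<Rightarrow> bool" where
  "is_cycle E vs \<longleftrightarrow> length vs \<ge> 3 \<and> distinct vs \<and>
     (\<forall>i < length vs. E (vs ! i) (vs ! ((i + 1) mod length vs)))"

definition chordless :: "('v \<Rightarrow> 'v \<Rightarrow> bool) \<Rightarrow> 'v list \<Rightarrow> bool" where
  "chordless E vs \<longleftrightarrow> (\<forall>i < length vs. \<forall>j < length vs.
     E (vs ! i) (vs ! j) \<longrightarrow> j = (i + 1) mod length vs \<or> i = (j + 1) mod length vs)"

definition has_cycle :: "('v \<Rightarrow> 'v \<Rightarrow> bool) \<Rightarrow> bool" where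
  "has_cycle E \<longleftrightarrow> (\<exists>vs. is_cycle E vs)"

definition graph_edges :: "('v \<Rightarrow> 'v \<Rightarrow> bool) \<Rightarrow> 'v set set" where
  "graph_edges E = {{p, q} | p q. E p q}"

definition cyc_edges :: "'v list \<Rightarrow> 'v set set" where
  "cyc_edges vs = {{vs ! i, vs ! ((i + 1) mod length vs)} | i. i < length vs}"

text \<open>Elements of the cycle space (over GF(2)): edge sets in which every vertex has even degree.\<close>
definition even_subgraph :: "('v \<Rightarrow> 'v \<Rightarrow> bool) \<Rightarrow> 'v set set \<Rightarrow> bool" where
  "even_subgraph E F \<longleftrightarrow> F \<subseteq> graph_edges E \<and> (\<forall>v. even (card {e \<in> F. v \<in> e}))"

text \<open>GF(2)-sum (iterated symmetric difference) of a finite family of edge sets.\<close>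
definition xsum :: "'e set set \<Rightarrow> 'e set" where
  "xsum S = {e. odd (card {C \<in> S. e \<in> C})}"

definition cycle_basis :: "('v \<Rightarrow> 'v \<Rightarrow> bool) \<Rightarrow> 'v set set set \<Rightarrow> bool" where
  "cycle_basis E B \<longleftrightarrow> finite B \<and> B \<subseteq> {cyc_edges vs | vs. is_cycle E vs} \<and>
     (\<forall>F. even_subgraph E F \<longrightarrow> (\<exists>!S. S \<subseteq> B \<and> xsum S = F))"

definition T_G :: "('v \<Rightarrow> 'v \<Rightarrow> bool) \<Rightarrow> nat" where
  "T_G E = (if has_cycle E then Max {length vs | vs. is_cycle E vs \<and> chordless E vs} else 2)"

text \<open>Length of a cycle = number of its edges.\<close>
definition C_G :: "('v \<Rightarrow> 'v \<Rightarrow> bool) \<Rightarrow> nat" where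
  "C_G E = (if has_cycle E then Min {Max (card ` B) | B. cycle_basis E B} else 2)"

record 's st =
  r1 :: int
  r2 :: int
  oth :: 's

text \<open>Parameters of Algorithm SS-DC: graph, alpha_1, alpha_2, K_1, K_2, rho, cond, cond_1,
  Initialization, Computation. The procedures return the new value of the other registers of p.\<close>
record ('v, 's) alg =
  gE :: "'v \<Rightarrow> 'v \<Rightarrow> bool"
  al1 :: int
  al2 :: int
  k1 :: int
  k2 :: int
  rho :: int
  cnd :: "('v \<Rightarrow> 's st) \<Rightarrow> 'v \<Rightarrow> bool"
  cnd1 :: "('v \<Rightarrow> 's st) \<Rightarrow> 'v \<Rightarrow> bool"
  ini :: "('v \<Rightarrow> 's st) \<Rightarrow> 'v \<Rightarrow> 's"
  cmp :: "('v \<Rightarrow> 's st) \<Rightarrow> 'v \<Rightarrow> 's"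

definition tl_set :: "int \<Rightarrow> int set" where "tl_set a = {-a..0}"
definition tlS_set :: "int \<Rightarrow> int set" where "tlS_set a = {-a..-1}"
definition ring_set :: "int \<Rightarrow> int set" where "ring_set K = {0..K-1}"

definition phi :: "int \<Rightarrow> int \<Rightarrow> int" where
  "phi K x = (if x \<ge> 0 then (x + 1) mod K else x + 1)"

definition ConvergenceStep ::
  "('v \<Rightarrow> 'v \<Rightarrow> bool) \<Rightarrow> int \<Rightarrow> ('s st \<Rightarrow> int) \<Rightarrow> ('v \<Rightarrow> 's st) \<Rightarrow> 'v \<Rightarrow> bool" where
  "ConvergenceStep E a R c p \<longleftrightarrow> R (c p) \<in> tlS_set a \<and>
     (\<forall>q. E p q \<longrightarrow> R (c q) \<in> tl_set a \<and> R (c p) \<le> R (c q))"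

definition LocallyCorrect ::
  "('v \<Rightarrow> 'v \<Rightarrow> bool) \<Rightarrow> int \<Rightarrow> ('s st \<Rightarrow> int) \<Rightarrow> ('v \<Rightarrow> 's st) \<Rightarrow> 'v \<Rightarrow> bool" where
  "LocallyCorrect E K R c p \<longleftrightarrow> R (c p) \<in> ring_set K \<and>
     (\<forall>q. E p q \<longrightarrow> R (c q) \<in> ring_set K \<and>
        (R (c p) = R (c q) \<or> R (c p) = phi K (R (c q)) \<or> phi K (R (c p)) = R (c q)))"

definition NormalStepR ::
  "('v \<Rightarrow> 'v \<Rightarrow> bool) \<Rightarrow> int \<Rightarrow> ('s st \<Rightarrow> int) \<Rightarrow> ('v \<Rightarrow> 's st) \<Rightarrow> 'v \<Rightarrow> bool" where
  "NormalStepR E K R c p \<longleftrightarrow> R (c p) \<in> ring_set K \<and>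
     (\<forall>q. E p q \<longrightarrow> R (c q) = R (c p) \<or> R (c q) = phi K (R (c p)))"

definition ResetInit ::
  "('v \<Rightarrow> 'v \<Rightarrow> bool) \<Rightarrow> int \<Rightarrow> int \<Rightarrow> ('s st \<Rightarrow> int) \<Rightarrow> ('v \<Rightarrow> 's st) \<Rightarrow> 'v \<Rightarrow> bool" where
  "ResetInit E K a R c p \<longleftrightarrow> \<not> LocallyCorrect E K R c p \<and> R (c p) \<notin> tl_set a"

definition NormalStep :: "('v, 's) alg \<Rightarrow> ('v \<Rightarrow> 's st) \<Rightarrow> 'v \<Rightarrow> bool" where
  "NormalStep P c p \<longleftrightarrow> NormalStepR (gE P) (k1 P) r1 c p \<and> LocallyCorrect (gE P) (k2 P) r2 c p"

datatype action = NA | CA1 | CA2 | RA1 | RA2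

definition enabled :: "('v, 's) alg \<Rightarrow> ('v \<Rightarrow> 's st) \<Rightarrow> 'v \<Rightarrow> action \<Rightarrow> bool" where
  "enabled P c p a = (case a of
      NA \<Rightarrow> NormalStep P c p
    | CA1 \<Rightarrow> ConvergenceStep (gE P) (al1 P) r1 c p
    | CA2 \<Rightarrow> ConvergenceStep (gE P) (al2 P) r2 c p
    | RA1 \<Rightarrow> ResetInit (gE P) (k1 P) (al1 P) r1 c p
    | RA2 \<Rightarrow> ResetInit (gE P) (k2 P) (al2 P) r2 c p)"

text \<open>In NA, the Initialization procedure is run after the possible update of r_2
  (it sees the configuration in which p.r_2 has been updated).\<close>
definition result :: "('v, 's) alg \<Rightarrow> ('v \<Rightarrow> 's st) \<Rightarrow> 'v \<Rightarrow> action \<Rightarrow> 's st" where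
  "result P c p a = (let s = c p in case a of
      NA \<Rightarrow>
        (if r1 s mod rho P = (rho P - 1) mod rho P then
           (let s' = (if NormalStepR (gE P) (k2 P) r2 c p \<and> cnd P c p \<and> cnd1 P c p
                      then s\<lparr>r2 := phi (k2 P) (r2 s)\<rparr> else s);
                s'' = s'\<lparr>oth := ini P (c(p := s')) p\<rparr>
            in s''\<lparr>r1 := phi (k1 P) (r1 s)\<rparr>)
         else s\<lparr>oth := cmp P c p, r1 := phi (k1 P) (r1 s)\<rparr>)
    | CA1 \<Rightarrow> s\<lparr>r1 := phi (k1 P) (r1 s)\<rparr>
    | CA2 \<Rightarrow> s\<lparr>r2 := phi (k2 P) (r2 s)\<rparr>
    | RA1 \<Rightarrow> s\<lparr>r1 := - al1 P\<rparr>
    | RA2 \<Rightarrow> s\<lparr>r2 := - al2 P\<rparr>)"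

text \<open>One step of the distributed (unfair) daemon: sigma p = Some a means p is chosen and
  executes the enabled action a; sigma p = None means p is not chosen. At least one
  process is chosen.\<close>
definition step :: "('v, 's) alg \<Rightarrow> ('v \<Rightarrow> 's st) \<Rightarrow> ('v \<Rightarrow> action option) \<Rightarrow> ('v \<Rightarrow> 's st) \<Rightarrow> bool" where
  "step P c \<sigma> c' \<longleftrightarrow> (\<exists>p. \<sigma> p \<noteq> None) \<and>
     (\<forall>p. case \<sigma> p of
            None \<Rightarrow> c' p = c p
          | Some a \<Rightarrow> enabled P c p a \<and> c' p = result P c p a)"

definition WU_i :: "('v \<Rightarrow> 'v \<Rightarrow> bool) \<Rightarrow> int \<Rightarrow> ('s st \<Rightarrow> int) \<Rightarrow> ('v \<Rightarrow> 's st) \<Rightarrow> bool" where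
  "WU_i E K R c \<longleftrightarrow> (\<forall>p. R (c p) \<in> ring_set K) \<and>
     (\<forall>p q. E p q \<longrightarrow> min ((R (c p) - R (c q)) mod K) ((R (c q) - R (c p)) mod K) \<le> 1)"

definition WU :: "('v, 's) alg \<Rightarrow> ('v \<Rightarrow> 's st) \<Rightarrow> bool" where
  "WU P c \<longleftrightarrow> WU_i (gE P) (k1 P) r1 c \<and> WU_i (gE P) (k2 P) r2 c"

end

theory Submission
  imports Defs
begin

text \<open>
  (1) Closure. From a WU configuration only NA can be enabled, and NA advances a clock
  only when no neighbour lags behind it, so WU is preserved by every step.

  (2) Deadlock freedom, the heart of the argument. Lift each edge difference of the clock
  r1 to an integer in {-1, 0, 1}. Its sum along a closed walk is a multiple of K1 bounded
  by the walk's length, hence zero on the cycles of a cycle basis of length at most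
  C_G < K1. Since the basis only generates the cycle space over GF(2), a 2-adic argument
  on integer circulations (halving the difference between a circulation and a sum of
  basis-cycle flows) shows the lifted sum vanishes on every closed walk. If no process
  could execute NA, each process would have a neighbour one tick behind it, and following
  these neighbours would give a closed walk whose lifted sum is minus its length.

  (3) Liveness. If a process stops forever, each neighbour moves at most twice more;
  by connectivity all processes eventually stop, contradicting that every step of the
  execution chooses some process.

  The bounds on alpha_i and T_G (needed for convergence to WU from arbitrary
  configurations) and the bound K2 > C_G are not used here.
\<close>

section \<open>Arithmetic on a clock ring\<close>

lemma ring_set_iff: "x \<in> ring_set K \<longleftrightarrow> 0 \<le> x \<and> x < K"
  unfolding ring_set_def by auto

lemma phi_on_ring: "a \<in> ring_set K \<Longrightarrow> phi K a = (if a = K - 1 then 0 else a + 1)"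
  unfolding phi_def ring_set_iff by auto

lemma phi_in_ring: "a \<in> ring_set K \<Longrightarrow> phi K a \<in> ring_set K"
  using phi_on_ring[of a K] unfolding ring_set_iff by auto

lemma phi_moves:
  assumes "3 \<le> K" "a \<in> ring_set K"
  shows "phi K a \<noteq> a" "phi K (phi K a) \<noteq> a"
  using assms phi_on_ring[OF assms(2)] phi_on_ring[OF phi_in_ring[OF assms(2)]]
  unfolding ring_set_iff by (auto split: if_splits)

definition ring_adj :: "int \<Rightarrow> int \<Rightarrow> int \<Rightarrow> bool" where
  "ring_adj K a b \<longleftrightarrow> a = b \<or> a = phi K b \<or> b = phi K a"

lemma mod_small: "-K < x \<Longrightarrow> x < (K::int) \<Longrightarrow> x mod K = (if 0 \<le> x then x else x + K)"
proof (cases "0 \<le> x")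
  case False
  assume "-K < x"
  then have "(x + K) mod K = x + K" using False by (intro mod_pos_pos_trivial) auto
  then show ?thesis using False by simp
qed simp

lemma ring_dist_le1_iff:
  assumes "3 \<le> K" "a \<in> ring_set K" "b \<in> ring_set K"
  shows "min ((a - b) mod K) ((b - a) mod K) \<le> 1 \<longleftrightarrow> ring_adj K a b"
  using assms mod_small[of K "a - b"] mod_small[of K "b - a"] phi_on_ring[OF assms(2)]
    phi_on_ring[OF assms(3)]
  unfolding ring_adj_def ring_set_iff by (auto simp: min_def)

definition ring_step :: "int \<Rightarrow> int \<Rightarrow> int \<Rightarrow> int" where
  "ring_step K a b = (if b = phi K a then 1 else if a = phi K b then -1 else 0)"

lemma ring_step_antisym:
  assumes "3 \<le> K" "a \<in> ring_set K" "b \<in> ring_set K"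
  shows "ring_step K b a = - ring_step K a b"
  using phi_moves(2)[OF assms(1,2)] unfolding ring_step_def by auto

lemma ring_step_cong:
  assumes "a \<in> ring_set K" "b \<in> ring_set K" "ring_adj K a b"
  shows "K dvd ring_step K a b - (b - a)"
  using assms phi_on_ring[OF assms(1)] phi_on_ring[OF assms(2)]
  unfolding ring_step_def ring_adj_def by auto

lemma ring_adj_preserved:
  assumes K: "3 \<le> K" and a: "a \<in> ring_set K" and ab: "ring_adj K a b"
    and a': "a' = a \<or> (a' = phi K a \<and> (b = a \<or> b = phi K a))"
    and b': "b' = b \<or> (b' = phi K b \<and> (a = b \<or> a = phi K b))"
  shows "ring_adj K a' b'"
  using a' b' ab phi_moves(2)[OF K a] unfolding ring_adj_def by auto

lemma sum_rotate: "(\<Sum>i<(L::nat). g ((i + 1) mod L)) = (\<Sum>i<L. g i)"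
proof (cases L)
  case (Suc m)
  have "(\<Sum>i<Suc m. g ((i + 1) mod Suc m)) = (\<Sum>i<m. g ((i + 1) mod Suc m)) + g 0"
    by simp
  also have "(\<Sum>i<m. g ((i + 1) mod Suc m)) = (\<Sum>i<m. g (Suc i))"
    by (rule sum.cong) auto
  also have "\<dots> + g 0 = (\<Sum>i<Suc m. g i)"
    by (simp only: sum.lessThan_Suc_shift add.commute)
  finally show ?thesis using Suc by simp
qed simp

lemma even_sum_iff:
  fixes f :: "'a \<Rightarrow> int"
  assumes "finite A"
  shows "even (\<Sum>x\<in>A. f x) \<longleftrightarrow> even (card {x\<in>A. odd (f x)})"
  using assms
proof (induction A rule: finite_induct)
  case (insert a A)
  have "{x\<in>insert a A. odd (f x)} = (if odd (f a) then insert a {x\<in>A. odd (f x)} else {x\<in>A. odd (f x)})"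
    by auto
  then show ?case using insert by auto
qed simp

lemma sum_point_indicator:
  "(\<Sum>x\<in>(UNIV::'a::finite set). if P \<and> a = x then f x else 0) = (if P then f a else 0)"
  "(\<Sum>x\<in>(UNIV::'a::finite set). if a = x \<and> P then f x else 0) = (if P then f a else 0)"
  by (cases P; simp)+

lemma sum_swap3: "(\<Sum>p\<in>A. \<Sum>q\<in>B. \<Sum>i\<in>C. F p q i) = (\<Sum>i\<in>C. \<Sum>p\<in>A. \<Sum>q\<in>B. F p q i)"
  by (simp only: sum.swap[of _ B C] sum.swap[of _ A C])

lemma sum_pair_indicator:
  fixes d :: "'v::finite \<Rightarrow> 'v \<Rightarrow> int"
  shows "(\<Sum>p\<in>UNIV. \<Sum>q\<in>UNIV.
           ((if a = p \<and> b = q then 1 else 0) - (if a = q \<and> b = p then 1 else 0)) * d p q) = d a b - d b a"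
  by (simp add: left_diff_distrib sum_subtractf sum_point_indicator
      if_distrib[where f="\<lambda>x. x * _"] cong: if_cong)

lemma potential_eventually_stable:
  fixes h :: "nat \<Rightarrow> nat"
  assumes mono: "\<And>k. h (Suc k) \<le> h k" and drop: "\<And>k. Q k \<Longrightarrow> h (Suc k) < h k"
  shows "\<exists>k0. \<forall>k\<ge>k0. \<not> Q k"
proof -
  obtain k0 where k0: "\<And>k. h k0 \<le> h k" using ex_has_least_nat[of "\<lambda>_. True" 0 h] by blast
  have "\<not> Q k" if "k0 \<le> k" for k
  proof
    assume "Q k"
    then have "h (Suc k) < h k" by (rule drop)
    moreover have "h k \<le> h k0" using lift_Suc_antimono_le[of h k0 k] mono that by blast
    ultimately show False using k0[of "Suc k"] by simp
  qed
  then show ?thesis by blast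
qed

lemma pow2_dvd_zero:
  fixes x :: int
  assumes "\<And>k. 2 ^ k dvd x"
  shows "x = 0"
proof (rule ccontr)
  assume "x \<noteq> 0"
  then have "2 ^ nat \<bar>x\<bar> \<le> \<bar>x\<bar>"
    using dvd_imp_le_int assms by (metis abs_of_nonneg zero_le_numeral zero_le_power)
  moreover have "\<bar>x\<bar> < 2 ^ nat \<bar>x\<bar>"
    using less_exp[of "nat \<bar>x\<bar>"] by (metis abs_ge_zero int_nat_eq of_nat_less_iff of_nat_numeral of_nat_power)
  ultimately show False by simp
qed

section \<open>Closed walks and integer circulations\<close>

definition cyc_next :: "'a list \<Rightarrow> nat \<Rightarrow> 'a" where
  "cyc_next ws i = ws ! ((i + 1) mod length ws)"

definition closed_walk :: "('v \<Rightarrow> 'v \<Rightarrow> bool) \<Rightarrow> 'v list \<Rightarrow> bool" where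
  "closed_walk E ws \<longleftrightarrow> ws \<noteq> [] \<and> (\<forall>i<length ws. E (ws ! i) (cyc_next ws i))"

definition walk_flow :: "'v list \<Rightarrow> 'v \<Rightarrow> 'v \<Rightarrow> int" where
  "walk_flow ws p q = (\<Sum>i<length ws.
     (if ws ! i = p \<and> cyc_next ws i = q then 1 else 0) - (if ws ! i = q \<and> cyc_next ws i = p then 1 else 0))"

definition circulation :: "('v::finite \<Rightarrow> 'v \<Rightarrow> bool) \<Rightarrow> ('v \<Rightarrow> 'v \<Rightarrow> int) \<Rightarrow> bool" where
  "circulation E z \<longleftrightarrow> (\<forall>p q. z q p = - z p q) \<and> (\<forall>p q. \<not> E p q \<longrightarrow> z p q = 0) \<and>
     (\<forall>p. (\<Sum>q\<in>UNIV. z p q) = 0)"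

lemma circulationI:
  assumes "\<And>p q. z q p = - z p q" "\<And>p q. \<not> E p q \<Longrightarrow> z p q = 0" "\<And>p. (\<Sum>q\<in>UNIV. z p q) = 0"
  shows "circulation E z"
  using assms unfolding circulation_def by blast

lemma circulation_antisym: "circulation E z \<Longrightarrow> z q p = - z p q"
  unfolding circulation_def by blast

lemma circulation_off_edge: "circulation E z \<Longrightarrow> \<not> E p q \<Longrightarrow> z p q = 0"
  unfolding circulation_def by blast

lemma circulation_balanced: "circulation E z \<Longrightarrow> (\<Sum>q\<in>UNIV. z p q) = 0"
  unfolding circulation_def by blast

definition drift :: "('v::finite \<Rightarrow> 'v \<Rightarrow> int) \<Rightarrow> ('v \<Rightarrow> 'v \<Rightarrow> int) \<Rightarrow> int" where
  "drift d z = (\<Sum>p\<in>UNIV. \<Sum>q\<in>UNIV. z p q * d p q)"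

text \<open>The flow of a closed walk is antisymmetric and balanced at every vertex: each arrival
  at a vertex is followed by a departure.\<close>

lemma walk_flow_antisym: "walk_flow ws q p = - walk_flow ws p q"
  unfolding walk_flow_def sum_negf[symmetric] by (rule sum.cong) auto

lemma walk_flow_balanced: "(\<Sum>q\<in>UNIV. walk_flow ws p q) = (0::int)" for ws :: "'v::finite list"
proof -
  have "(\<Sum>q\<in>UNIV. walk_flow ws p q)
      = (\<Sum>i<length ws. (if ws ! i = p then 1 else 0) - (if cyc_next ws i = p then 1 else 0))"
    unfolding walk_flow_def by (subst sum.swap) (simp add: sum_subtractf sum_point_indicator)
  also have "\<dots> = 0"
    using sum_rotate[of "\<lambda>j. if ws ! j = p then (1::int) else 0" "length ws"]
    by (simp add: sum_subtractf cyc_next_def)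
  finally show ?thesis .
qed

lemma drift_walk_flow:
  fixes d :: "'v::finite \<Rightarrow> 'v \<Rightarrow> int"
  assumes "\<forall>i<length ws. d (cyc_next ws i) (ws ! i) = - d (ws ! i) (cyc_next ws i)"
  shows "drift d (walk_flow ws) = 2 * (\<Sum>i<length ws. d (ws ! i) (cyc_next ws i))"
proof -
  have "drift d (walk_flow ws) = (\<Sum>i<length ws. \<Sum>p\<in>UNIV. \<Sum>q\<in>UNIV.
      ((if ws ! i = p \<and> cyc_next ws i = q then 1 else 0)
       - (if ws ! i = q \<and> cyc_next ws i = p then 1 else 0)) * d p q)"
    unfolding drift_def walk_flow_def sum_distrib_right by (rule sum_swap3)
  also have "\<dots> = (\<Sum>i<length ws. d (ws ! i) (cyc_next ws i) - d (cyc_next ws i) (ws ! i))"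
    by (rule sum.cong[OF refl], rule sum_pair_indicator)
  also have "\<dots> = (\<Sum>i<length ws. 2 * d (ws ! i) (cyc_next ws i))"
    using assms by (intro sum.cong) auto
  finally show ?thesis by (simp only: sum_distrib_left)
qed

lemma drift_sum: "drift d (\<lambda>p q. \<Sum>C\<in>S. f C p q) = (\<Sum>C\<in>S. drift d (f C))"
  unfolding drift_def sum_distrib_right by (rule sum_swap3)

lemma circulation_sum:
  assumes "\<forall>C\<in>S. circulation E (f C)"
  shows "circulation E (\<lambda>p q. \<Sum>C\<in>S. f C p q)"
proof (rule circulationI)
  fix p q
  show "(\<Sum>C\<in>S. f C q p) = - (\<Sum>C\<in>S. f C p q)"
    using assms circulation_antisym unfolding sum_negf[symmetric] by (intro sum.cong) blast+
  show "\<not> E p q \<Longrightarrow> (\<Sum>C\<in>S. f C p q) = 0"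
    using assms circulation_off_edge by (intro sum.neutral) blast
next
  fix p
  have "(\<Sum>q\<in>UNIV. \<Sum>C\<in>S. f C p q) = (\<Sum>C\<in>S. \<Sum>q\<in>UNIV. f C p q)" by (rule sum.swap)
  also have "\<dots> = 0" using assms circulation_balanced by (intro sum.neutral) blast
  finally show "(\<Sum>q\<in>UNIV. \<Sum>C\<in>S. f C p q) = 0" .
qed

lemma half_circulation:
  assumes z: "circulation E z" and y: "circulation E y" and ev: "\<And>p q. even (z p q - y p q)"
  shows "circulation E (\<lambda>p q. (z p q - y p q) div 2)"
proof (rule circulationI)
  fix p q
  have flip: "z q p - y q p = - (z p q - y p q)"
    using circulation_antisym[OF z, of p q] circulation_antisym[OF y, of p q] by simp
  obtain k where "z p q - y p q = 2 * k" using ev[of p q] by (rule evenE)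
  then show "(z q p - y q p) div 2 = - ((z p q - y p q) div 2)" unfolding flip by simp
  show "\<not> E p q \<Longrightarrow> (z p q - y p q) div 2 = 0"
    using circulation_off_edge[OF z] circulation_off_edge[OF y] by simp
next
  fix p
  have "2 * (\<Sum>q\<in>UNIV. (z p q - y p q) div 2) = (\<Sum>q\<in>UNIV. z p q) - (\<Sum>q\<in>UNIV. y p q)"
    using ev by (simp add: sum_distrib_left sum_subtractf)
  then show "(\<Sum>q\<in>UNIV. (z p q - y p q) div 2) = 0"
    using circulation_balanced[OF z] circulation_balanced[OF y] by simp
qed

lemma funpow_periodic_point:
  fixes f :: "'a::finite \<Rightarrow> 'a"
  shows "\<exists>y n. 0 < n \<and> (f ^^ n) y = y"
proof -
  define g where "g k = (f ^^ k) undefined" for k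
  have "\<not> inj g"
  proof
    assume "inj g"
    then have "finite (UNIV :: nat set)" using finite_imageD[of g UNIV] by simp
    then show False by simp
  qed
  then obtain a b where ab: "a \<noteq> b" "g a = g b" unfolding inj_def by blast
  obtain i j where ij: "i < j" "g i = g j"
  proof (cases "a < b")
    case True then show ?thesis using that ab by blast
  next
    case False then show ?thesis using that[of b a] ab by simp
  qed
  have "(f ^^ (j - i)) (g i) = (f ^^ (j - i + i)) undefined" unfolding g_def by (simp add: funpow_add)
  also have "\<dots> = g j" using ij(1) unfolding g_def by simp
  finally show ?thesis using ij by (metis zero_less_diff)
qed

lemma successor_closed_walk:
  fixes f :: "'v::finite \<Rightarrow> 'v"
  assumes fE: "\<And>p. E p (f p)"
  shows "\<exists>ws. closed_walk E ws \<and> (\<forall>i<length ws. cyc_next ws i = f (ws ! i))"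
proof -
  obtain y n where "0 < n" and returns: "(f ^^ n) y = y" using funpow_periodic_point by blast
  define ws where "ws = map (\<lambda>k. (f ^^ k) y) [0..<n]"
  have len: "length ws = n" and ws_nth: "\<And>k. k < n \<Longrightarrow> ws ! k = (f ^^ k) y"
    unfolding ws_def by simp_all
  have next_f: "cyc_next ws k = f (ws ! k)" if "k < n" for k
  proof (cases "k + 1 < n")
    case True
    then show ?thesis using ws_nth that unfolding cyc_next_def len by simp
  next
    case False
    then have "k + 1 = n" using that by simp
    then have "cyc_next ws k = (f ^^ n) y" unfolding cyc_next_def len using ws_nth[of 0] \<open>0 < n\<close> returns by simp
    also have "\<dots> = f (ws ! k)" using ws_nth[of k] that \<open>k + 1 = n\<close> by (metis Suc_eq_plus1 funpow.simps(2) o_apply)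
    finally show ?thesis .
  qed
  have "closed_walk E ws" unfolding closed_walk_def
  proof (intro conjI allI impI)
    show "ws \<noteq> []" using len \<open>0 < n\<close> by auto
  next
    fix k assume "k < length ws"
    then show "E (ws ! k) (cyc_next ws k)" using next_f fE len by simp
  qed
  then show ?thesis using next_f len by auto
qed

definition odd_support :: "('v \<Rightarrow> 'v \<Rightarrow> int) \<Rightarrow> 'v set set" where
  "odd_support z = {{p, q} | p q. odd (z p q)}"

lemma odd_support_iff:
  assumes "circulation E z"
  shows "{p, q} \<in> odd_support z \<longleftrightarrow> odd (z p q)"
proof -
  have odd_sym: "odd (z q p) \<longleftrightarrow> odd (z p q)" for p q
    by (simp only: circulation_antisym[OF assms, of q p] even_minus)
  show ?thesis
  proof
    assume "{p, q} \<in> odd_support z"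
    then obtain a b where ab: "{p, q} = {a, b}" "odd (z a b)" unfolding odd_support_def by blast
    then have "(p = a \<and> q = b) \<or> (p = b \<and> q = a)" by (simp add: doubleton_eq_iff)
    then show "odd (z p q)" using ab(2) odd_sym[of a b] by blast
  qed (auto simp: odd_support_def)
qed

lemma cycle_closed_walk: "is_cycle E vs \<Longrightarrow> closed_walk E vs"
  unfolding is_cycle_def closed_walk_def cyc_next_def by auto

lemma cyc_edges_image: "cyc_edges vs = (\<lambda>i. {vs ! i, cyc_next vs i}) ` {..<length vs}"
  unfolding cyc_edges_def cyc_next_def by auto

lemma cycle_next_index:
  assumes "is_cycle E vs" "i < length vs" "j < length vs" "cyc_next vs i = vs ! j"
  shows "j = (i + 1) mod length vs"
proof -
  have "(i + 1) mod length vs < length vs" using assms(2) by (intro mod_less_divisor) linarith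
  then show ?thesis using assms nth_eq_iff_index_eq[of vs j "(i + 1) mod length vs"]
    unfolding is_cycle_def cyc_next_def by auto
qed

lemma cycle_edge_inj:
  assumes c: "is_cycle E vs"
  shows "inj_on (\<lambda>i. {vs ! i, cyc_next vs i}) {..<length vs}"
proof (rule inj_onI)
  fix i j assume i: "i \<in> {..<length vs}" and j: "j \<in> {..<length vs}"
    and e: "{vs ! i, cyc_next vs i} = {vs ! j, cyc_next vs j}"
  have dist: "distinct vs" and L: "3 \<le> length vs" using c unfolding is_cycle_def by auto
  consider "vs ! i = vs ! j" | "vs ! i = cyc_next vs j" "cyc_next vs i = vs ! j"
    using e by (auto simp: doubleton_eq_iff)
  then show "i = j"
  proof cases
    case 1 then show ?thesis using dist i j nth_eq_iff_index_eq by auto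
  next
    case 2
    then have "j = (i + 1) mod length vs" "i = (j + 1) mod length vs"
      using cycle_next_index[OF c] i j by (metis lessThan_iff)+
    then show ?thesis using i j L by (auto simp: mod_if split: if_splits)
  qed
qed

lemma card_cyc_edges: "is_cycle E vs \<Longrightarrow> card (cyc_edges vs) = length vs"
  unfolding cyc_edges_image by (simp add: card_image cycle_edge_inj)

lemma cycle_edge_count:
  assumes c: "is_cycle E vs"
  shows "card {i\<in>{..<length vs}. {vs ! i, cyc_next vs i} = e} = (if e \<in> cyc_edges vs then 1 else 0)"
proof (cases "e \<in> cyc_edges vs")
  case True
  let ?edge = "\<lambda>i. {vs ! i, cyc_next vs i}"
  obtain j where j: "j < length vs" "?edge j = e" using True unfolding cyc_edges_image by auto
  have "{i\<in>{..<length vs}. ?edge i = e} = {j}"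
  proof (intro set_eqI iffI)
    fix i assume "i \<in> {i\<in>{..<length vs}. ?edge i = e}"
    then have "i \<in> {..<length vs}" "?edge i = ?edge j" using j by auto
    then show "i \<in> {j}" using inj_onD[OF cycle_edge_inj[OF c], of i j] j(1) by simp
  qed (use j in simp)
  then show ?thesis using True by simp
next
  case False
  then show ?thesis unfolding cyc_edges_image by auto
qed

lemma walk_flow_parity:
  assumes "p \<noteq> q"
  shows "odd (walk_flow ws p q) \<longleftrightarrow> odd (card {i\<in>{..<length ws}. {ws ! i, cyc_next ws i} = {p, q}})"
proof -
  have "odd ((if ws ! i = p \<and> cyc_next ws i = q then 1 else 0)
          - (if ws ! i = q \<and> cyc_next ws i = p then 1 else (0::int)))
        \<longleftrightarrow> {ws ! i, cyc_next ws i} = {p, q}" for i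
    using assms by (auto simp: doubleton_eq_iff)
  then show ?thesis unfolding walk_flow_def by (subst even_sum_iff) simp_all
qed

lemma xsum_empty: "xsum {} = {}"
  unfolding xsum_def by simp

lemma xsum_singleton: "xsum {C} = C"
  unfolding xsum_def by (auto simp: Collect_conv_if)

lemma card_symdiff:
  assumes "finite A" "finite B"
  shows "card (A - B \<union> (B - A)) + 2 * card (A \<inter> B) = card A + card B"
proof -
  have "card (A \<union> B) = card (A - B \<union> (B - A)) + card (A \<inter> B)"
    using assms by (subst card_Un_disjoint[symmetric]) (auto intro: arg_cong[where f=card])
  then show ?thesis using card_Un_Int[OF assms] by simp
qed

lemma xsum_symdiff:
  assumes "finite S" "finite T"
  shows "xsum (S - T \<union> (T - S)) = xsum S - xsum T \<union> (xsum T - xsum S)"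
proof -
  have "odd (card {C \<in> S - T \<union> (T - S). e \<in> C}) \<longleftrightarrow> odd (card {C\<in>S. e \<in> C}) \<noteq> odd (card {C\<in>T. e \<in> C})"
    for e
  proof -
    let ?A = "{C\<in>S. e \<in> C}" and ?B = "{C\<in>T. e \<in> C}"
    have "{C \<in> S - T \<union> (T - S). e \<in> C} = (?A - ?B) \<union> (?B - ?A)" by blast
    moreover have "card ((?A - ?B) \<union> (?B - ?A)) + 2 * card (?A \<inter> ?B) = card ?A + card ?B"
      using assms by (intro card_symdiff) simp_all
    ultimately show ?thesis by presburger
  qed
  then show ?thesis unfolding xsum_def by blast
qed

definition cycle_family :: "('v \<Rightarrow> 'v \<Rightarrow> bool) \<Rightarrow> 'v set set set" where
  "cycle_family E = {cyc_edges vs | vs. is_cycle E vs}"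

definition spans :: "('v \<Rightarrow> 'v \<Rightarrow> bool) \<Rightarrow> 'v set set set \<Rightarrow> bool" where
  "spans E B \<longleftrightarrow> (\<forall>F. even_subgraph E F \<longrightarrow> (\<exists>S\<subseteq>B. xsum S = F))"

lemma cycle_basis_family: "cycle_basis E B \<Longrightarrow> B \<subseteq> cycle_family E"
  unfolding cycle_basis_def cycle_family_def by (elim conjE)

lemma cycle_basis_spans: "cycle_basis E B \<Longrightarrow> even_subgraph E F \<Longrightarrow> \<exists>S\<subseteq>B. xsum S = F"
  unfolding cycle_basis_def by (elim conjE allE impE) (assumption, blast)

definition cycle_of :: "('v \<Rightarrow> 'v \<Rightarrow> bool) \<Rightarrow> 'v set set \<Rightarrow> 'v list" where
  "cycle_of E C = (SOME vs. is_cycle E vs \<and> cyc_edges vs = C)"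

lemma cycle_of:
  assumes "C \<in> cycle_family E"
  shows "is_cycle E (cycle_of E C)" "cyc_edges (cycle_of E C) = C"
proof -
  have "\<exists>vs. is_cycle E vs \<and> cyc_edges vs = C" using assms unfolding cycle_family_def by blast
  then have "is_cycle E (cycle_of E C) \<and> cyc_edges (cycle_of E C) = C"
    unfolding cycle_of_def by (rule someI_ex)
  then show "is_cycle E (cycle_of E C)" "cyc_edges (cycle_of E C) = C" by simp_all
qed

definition simple_path :: "'v set set \<Rightarrow> 'v list \<Rightarrow> bool" where
  "simple_path F ps \<longleftrightarrow> distinct ps \<and> (\<forall>i. Suc i < length ps \<longrightarrow> {ps ! i, ps ! Suc i} \<in> F)"

section \<open>The cycle space of a graph\<close>

locale ugraph =
  fixes E :: "'v::finite \<Rightarrow> 'v \<Rightarrow> bool"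
  assumes sym: "\<forall>p q. E p q \<longrightarrow> E q p" and irrefl: "\<forall>p. \<not> E p p"
begin

lemma walk_flow_circulation:
  assumes "closed_walk E ws"
  shows "circulation E (walk_flow ws)"
proof (rule circulationI)
  fix p q assume "\<not> E p q"
  show "walk_flow ws p q = 0" unfolding walk_flow_def
  proof (rule sum.neutral, rule ballI)
    fix i assume "i \<in> {..<length ws}"
    then have "E (ws ! i) (cyc_next ws i)" using assms unfolding closed_walk_def by simp
    then have "\<not> (ws ! i = p \<and> cyc_next ws i = q)" "\<not> (ws ! i = q \<and> cyc_next ws i = p)"
      using \<open>\<not> E p q\<close> sym by blast+
    then show "(if ws ! i = p \<and> cyc_next ws i = q then 1 else 0)
               - (if ws ! i = q \<and> cyc_next ws i = p then 1 else 0) = (0::int)"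
      by (simp only: if_False diff_self)
  qed
qed (rule walk_flow_antisym walk_flow_balanced)+

lemma cyc_edges_not_singleton:
  assumes c: "is_cycle E vs"
  shows "{p} \<notin> cyc_edges vs"
proof
  assume "{p} \<in> cyc_edges vs"
  then obtain i where i: "i \<in> {..<length vs}" "{p} = {vs ! i, cyc_next vs i}"
    unfolding cyc_edges_image by (rule imageE)
  then have "vs ! i = cyc_next vs i" by (metis insertI1 insert_commute singletonD)
  moreover have "E (vs ! i) (cyc_next vs i)"
    using cycle_closed_walk[OF c] i(1) unfolding closed_walk_def by simp
  ultimately show False using irrefl by metis
qed

lemma cycle_flow_parity:
  assumes c: "is_cycle E vs"
  shows "odd (walk_flow vs p q) \<longleftrightarrow> {p, q} \<in> cyc_edges vs"
proof (cases "p = q")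
  case True
  have "walk_flow vs p p = 0" using walk_flow_antisym[of vs p p] by linarith
  then show ?thesis using True cyc_edges_not_singleton[OF c] by simp
next
  case False
  then show ?thesis using walk_flow_parity[OF False] cycle_edge_count[OF c] by simp
qed

lemma odd_support_even:
  assumes z: "circulation E z"
  shows "even_subgraph E (odd_support z)"
  unfolding even_subgraph_def
proof (intro conjI allI)
  have "E p q" if "odd (z p q)" for p q
    using circulation_off_edge[OF z, of p q] that by fastforce
  then show "odd_support z \<subseteq> graph_edges E"
    unfolding odd_support_def graph_edges_def by blast
next
  fix v
  have "z v v = 0" using circulation_antisym[OF z, of v v] by linarith
  then have inj: "inj_on (\<lambda>q. {v, q}) {q. odd (z v q)}"
    by (intro inj_onI) (auto simp: doubleton_eq_iff)
  have "{e \<in> odd_support z. v \<in> e} = (\<lambda>q. {v, q}) ` {q. odd (z v q)}"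
  proof (intro set_eqI iffI)
    fix e assume e: "e \<in> {e \<in> odd_support z. v \<in> e}"
    then obtain w where "e = {v, w}" unfolding odd_support_def by blast
    then show "e \<in> (\<lambda>q. {v, q}) ` {q. odd (z v q)}" using e odd_support_iff[OF z] by blast
  qed (use odd_support_iff[OF z] in blast)
  then have "card {e \<in> odd_support z. v \<in> e} = card {q \<in> UNIV. odd (z v q)}"
    using card_image[OF inj] by simp
  moreover have "(\<Sum>q\<in>UNIV. z v q) = 0" by (rule circulation_balanced[OF z])
  ultimately show "even (card {e \<in> odd_support z. v \<in> e})"
    using even_sum_iff[of UNIV "z v"] by simp
qed

lemma cycle_odd_support:
  assumes c: "is_cycle E vs"
  shows "odd_support (walk_flow vs) = cyc_edges vs"
proof -
  have circ: "circulation E (walk_flow vs)"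
    by (rule walk_flow_circulation[OF cycle_closed_walk[OF c]])
  show ?thesis
  proof (intro set_eqI iffI)
    fix e assume "e \<in> odd_support (walk_flow vs)"
    then obtain p q where "e = {p, q}" "odd (walk_flow vs p q)" unfolding odd_support_def by blast
    then show "e \<in> cyc_edges vs" using cycle_flow_parity[OF c] by blast
  next
    fix e assume e: "e \<in> cyc_edges vs"
    then obtain p q where "e = {p, q}" unfolding cyc_edges_def by blast
    then show "e \<in> odd_support (walk_flow vs)"
      using e cycle_flow_parity[OF c] odd_support_iff[OF circ] by blast
  qed
qed

lemma cycle_even: "is_cycle E vs \<Longrightarrow> even_subgraph E (cyc_edges vs)"
  using odd_support_even[OF walk_flow_circulation[OF cycle_closed_walk]] cycle_odd_support
  by simp

lemma graph_edge_adj: "{x, y} \<in> graph_edges E \<Longrightarrow> E x y"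
  unfolding graph_edges_def using sym by (auto simp: doubleton_eq_iff)

lemma simple_path_closes:
  assumes FG: "F \<subseteq> graph_edges E" and ps: "simple_path F ps"
    and j: "j < length ps" "2 \<le> j" and closing: "{ps ! j, ps ! 0} \<in> F"
  shows "is_cycle E (take (Suc j) ps) \<and> cyc_edges (take (Suc j) ps) \<subseteq> F"
proof -
  define vs where "vs = take (Suc j) ps"
  have len: "length vs = Suc j" and nth: "\<And>i. i < Suc j \<Longrightarrow> vs ! i = ps ! i"
    using j unfolding vs_def by simp_all
  have edges: "{vs ! i, cyc_next vs i} \<in> F" if "i < length vs" for i
  proof (cases "i < j")
    case True
    then show ?thesis using ps j nth[of i] nth[of "Suc i"] unfolding simple_path_def cyc_next_def len by simp
  next
    case False
    then have "i = j" using that len by simp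
    then show ?thesis using closing nth[of j] nth[of 0] unfolding cyc_next_def len by simp
  qed
  have "is_cycle E vs"
    unfolding is_cycle_def
    using len j ps edges FG graph_edge_adj unfolding simple_path_def vs_def cyc_next_def by auto
  moreover have "cyc_edges vs \<subseteq> F" unfolding cyc_edges_image using edges by blast
  ultimately show ?thesis unfolding vs_def by blast
qed

lemma longest_simple_path:
  assumes FG: "F \<subseteq> graph_edges E" and ne: "F \<noteq> {}"
  obtains ps where "simple_path F ps" "2 \<le> length ps"
    "\<And>qs. simple_path F qs \<Longrightarrow> 2 \<le> length qs \<Longrightarrow> length qs \<le> length ps"
proof -
  obtain a b where ab: "{a, b} \<in> F" "E a b" using ne FG unfolding graph_edges_def by blast
  then have start: "simple_path F [a, b] \<and> 2 \<le> length [a, b]"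
    using irrefl unfolding simple_path_def by (auto simp: less_Suc_eq)
  have bounded: "\<forall>ps. simple_path F ps \<and> 2 \<le> length ps \<longrightarrow> length ps < Suc (card (UNIV :: 'v set))"
  proof (intro allI impI)
    fix ps assume "simple_path F ps \<and> 2 \<le> length ps"
    then have "length ps = card (set ps)" unfolding simple_path_def by (simp add: distinct_card)
    also have "\<dots> \<le> card (UNIV :: 'v set)" by (rule card_mono) auto
    finally show "length ps < Suc (card (UNIV :: 'v set))" by simp
  qed
  show ?thesis using ex_has_greatest_nat[OF start bounded] that by blast
qed

lemma even_subgraph_second_edge:
  assumes ev: "even_subgraph E F" and vu: "{v, u} \<in> F"
  obtains w where "{v, w} \<in> F" "w \<noteq> u" "w \<noteq> v"
proof -
  have FG: "F \<subseteq> graph_edges E" using ev unfolding even_subgraph_def by blast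
  have "{e \<in> F. v \<in> e} - {{v, u}} \<noteq> {}"
  proof
    assume "{e \<in> F. v \<in> e} - {{v, u}} = {}"
    then have "{e \<in> F. v \<in> e} \<subseteq> {{v, u}}" by (simp only: Diff_eq_empty_iff)
    moreover have "{v, u} \<in> {e \<in> F. v \<in> e}" using vu by simp
    ultimately have "{e \<in> F. v \<in> e} = {{v, u}}" by (metis empty_iff subset_singleton_iff)
    then have "card {e \<in> F. v \<in> e} = 1" by simp
    moreover have "even (card {e \<in> F. v \<in> e})" using ev unfolding even_subgraph_def by blast
    ultimately show False by simp
  qed
  then obtain e where e: "e \<in> F" "v \<in> e" "e \<noteq> {v, u}" by blast
  then obtain x y where "e = {x, y}" using FG unfolding graph_edges_def by blast
  then obtain w where "e = {v, w}" using e(2) by (metis insert_commute insertE singletonD)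
  moreover have "w \<noteq> v" using calculation e(1) FG graph_edge_adj irrefl by blast
  ultimately show ?thesis using that e by blast
qed

text \<open>Every nonempty even subgraph contains a cycle: a longest simple path cannot be extended
  at its first vertex, whose second incident edge therefore leads back into the path.\<close>

lemma even_subgraph_has_cycle:
  assumes ev: "even_subgraph E F" and ne: "F \<noteq> {}"
  shows "\<exists>vs. is_cycle E vs \<and> cyc_edges vs \<subseteq> F"
proof -
  have FG: "F \<subseteq> graph_edges E" using ev unfolding even_subgraph_def by blast
  obtain ps where ps: "simple_path F ps" "2 \<le> length ps"
    and longest: "\<And>qs. simple_path F qs \<Longrightarrow> 2 \<le> length qs \<Longrightarrow> length qs \<le> length ps"
    using longest_simple_path[OF FG ne] by blast
  have "{ps ! 0, ps ! 1} \<in> F" using ps unfolding simple_path_def by simp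
  then obtain w where w: "{ps ! 0, w} \<in> F" "w \<noteq> ps ! 1" "w \<noteq> ps ! 0"
    using even_subgraph_second_edge[OF ev] by blast
  have "w \<in> set ps"
  proof (rule ccontr)
    assume "w \<notin> set ps"
    then have "simple_path F (w # ps)"
      using ps w(1) unfolding simple_path_def by (auto simp: insert_commute nth_Cons split: nat.split)
    then show False using longest[of "w # ps"] ps(2) by simp
  qed
  then obtain j where j: "j < length ps" "ps ! j = w" by (metis in_set_conv_nth)
  have "j \<noteq> 0" using j(2) w(3) by (cases j) auto
  moreover have "j \<noteq> 1" using j(2) w(2) by (cases "j = 1") auto
  ultimately have "2 \<le> j" by simp
  moreover have "{ps ! j, ps ! 0} \<in> F" using w(1) j(2) by (simp add: insert_commute)
  ultimately show ?thesis using simple_path_closes[OF FG ps(1) j(1)] by blast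
qed

lemma even_subgraph_remove_cycle:
  assumes ev: "even_subgraph E F" and c: "is_cycle E vs" and sub: "cyc_edges vs \<subseteq> F"
  shows "even_subgraph E (F - cyc_edges vs)"
  unfolding even_subgraph_def
proof (intro conjI allI)
  show "F - cyc_edges vs \<subseteq> graph_edges E" using ev unfolding even_subgraph_def by blast
  fix v
  have eq: "{e \<in> F - cyc_edges vs. v \<in> e} = {e \<in> F. v \<in> e} - {e \<in> cyc_edges vs. v \<in> e}" by blast
  have "card {e \<in> F - cyc_edges vs. v \<in> e} = card {e \<in> F. v \<in> e} - card {e \<in> cyc_edges vs. v \<in> e}"
    unfolding eq by (rule card_Diff_subset) (use sub in auto)
  moreover have "even (card {e \<in> F. v \<in> e})" using ev unfolding even_subgraph_def by blast
  moreover have "even (card {e \<in> cyc_edges vs. v \<in> e})"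
    using cycle_even[OF c] unfolding even_subgraph_def by blast
  ultimately show "even (card {e \<in> F - cyc_edges vs. v \<in> e})" by simp
qed

text \<open>The cycles span the cycle space: peel off cycles one at a time.\<close>

lemma cycles_span: "spans E (cycle_family E)"
  unfolding spans_def
proof (intro allI impI)
  fix F :: "'v set set"
  show "even_subgraph E F \<Longrightarrow> \<exists>S\<subseteq>cycle_family E. xsum S = F"
  proof (induction "card F" arbitrary: F rule: less_induct)
    case less
    show ?case
    proof (cases "F = {}")
      case True then show ?thesis using xsum_empty by blast
    next
      case False
      then obtain vs where vs: "is_cycle E vs" "cyc_edges vs \<subseteq> F"
        using even_subgraph_has_cycle[OF less.prems] by blast
      let ?C = "cyc_edges vs"
      have "?C \<noteq> {}" using card_cyc_edges[OF vs(1)] vs(1) unfolding is_cycle_def by auto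
      then have "card (F - ?C) < card F"
        using vs(2) by (intro psubset_card_mono) auto
      then obtain S where S: "S \<subseteq> cycle_family E" "xsum S = F - ?C"
        using less.hyps even_subgraph_remove_cycle[OF less.prems vs] by blast
      have "xsum (S - {?C} \<union> ({?C} - S)) = F"
        using vs(2) by (simp add: xsum_symdiff xsum_singleton S(2)) blast
      moreover have "S - {?C} \<union> ({?C} - S) \<subseteq> cycle_family E"
        using S(1) vs(1) unfolding cycle_family_def by blast
      ultimately show ?thesis by blast
    qed
  qed
qed

text \<open>A spanning family of cycles of minimum size is a cycle basis: if a sum had two
  representations, their symmetric difference would be a nonempty family summing to the
  empty set, and any of its members could be dropped from the family.\<close>

lemma cycle_basis_exists: "\<exists>B. cycle_basis E B"
proof -
  obtain B where B: "B \<subseteq> cycle_family E" "spans E B"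
    and minimal: "\<And>B'. B' \<subseteq> cycle_family E \<Longrightarrow> spans E B' \<Longrightarrow> card B \<le> card B'"
    using ex_has_least_nat[of "\<lambda>B. B \<subseteq> cycle_family E \<and> spans E B" "cycle_family E" card]
      cycles_span by blast
  have unique: "S1 = S2" if "S1 \<subseteq> B" "S2 \<subseteq> B" "xsum S1 = xsum S2" for S1 S2
  proof (rule ccontr)
    assume "S1 \<noteq> S2"
    let ?D = "S1 - S2 \<union> (S2 - S1)"
    have D0: "xsum ?D = {}" using xsum_symdiff[of S1 S2] that by simp
    obtain C where C: "C \<in> ?D" using \<open>S1 \<noteq> S2\<close> by blast
    have "spans E (B - {C})"
      unfolding spans_def
    proof (intro allI impI)
      fix F assume "even_subgraph E F"
      then obtain S where S: "S \<subseteq> B" "xsum S = F" using B(2) unfolding spans_def by blast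
      show "\<exists>S'\<subseteq>B - {C}. xsum S' = F"
      proof (cases "C \<in> S")
        case True
        have "xsum (S - ?D \<union> (?D - S)) = F" using xsum_symdiff[of S ?D] D0 S(2) by simp
        moreover have "S - ?D \<union> (?D - S) \<subseteq> B - {C}" using True C S(1) that by blast
        ultimately show ?thesis by blast
      qed (use S in blast)
    qed
    then have "card B \<le> card (B - {C})" using minimal B(1) by blast
    moreover have "C \<in> B" using C that by blast
    then have "card (B - {C}) < card B" by (intro card_Diff1_less) simp_all
    ultimately show False by simp
  qed
  have "cycle_basis E B"
    unfolding cycle_basis_def
  proof (intro conjI allI impI)
    show "B \<subseteq> {cyc_edges vs |vs. is_cycle E vs}" using B(1) unfolding cycle_family_def .
    fix F assume "even_subgraph E F"
    then obtain S where "S \<subseteq> B" "xsum S = F" using B(2) unfolding spans_def by blast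
    then show "\<exists>!S. S \<subseteq> B \<and> xsum S = F" using unique by blast
  qed simp
  then show ?thesis by blast
qed

lemma short_cycle_basis: "\<exists>B. cycle_basis E B \<and> (\<forall>C\<in>B. card C \<le> C_G E)"
proof (cases "has_cycle E")
  case True
  let ?M = "{Max (card ` B) | B. cycle_basis E B}"
  have "?M = (\<lambda>B. Max (card ` B)) ` {B. cycle_basis E B}" by blast
  then have "finite ?M" by simp
  moreover have "?M \<noteq> {}" using cycle_basis_exists by blast
  ultimately have "Min ?M \<in> ?M" by (rule Min_in)
  moreover have "C_G E = Min ?M" using True unfolding C_G_def by simp
  ultimately obtain B where B: "cycle_basis E B" "Max (card ` B) = C_G E" by auto
  moreover have "finite B" using B(1) unfolding cycle_basis_def by blast
  ultimately show ?thesis by (metis Max_ge finite_imageI imageI)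
next
  case False
  obtain B where B: "cycle_basis E B" using cycle_basis_exists by blast
  then have "B = {}" using False unfolding cycle_basis_def has_cycle_def by blast
  then show ?thesis using B by blast
qed

lemma basis_flow_parity:
  assumes B: "cycle_basis E B" and z: "circulation E z"
    and S: "S \<subseteq> B" "xsum S = odd_support z"
  shows "even (z p q - (\<Sum>C\<in>S. walk_flow (cycle_of E C) p q))"
proof -
  have SC: "C \<in> cycle_family E" if "C \<in> S" for C
    using cycle_basis_family[OF B] S(1) that by blast
  have "even (\<Sum>C\<in>S. walk_flow (cycle_of E C) p q) \<longleftrightarrow> even (card {C\<in>S. {p, q} \<in> C})"
  proof -
    have "odd (walk_flow (cycle_of E C) p q) \<longleftrightarrow> {p, q} \<in> C" if "C \<in> S" for C
      using cycle_flow_parity[OF cycle_of(1)[OF SC[OF that]]] cycle_of(2)[OF SC[OF that]] by simp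
    then have "{C\<in>S. odd (walk_flow (cycle_of E C) p q)} = {C\<in>S. {p, q} \<in> C}" by blast
    then show ?thesis by (simp add: even_sum_iff)
  qed
  also have "\<dots> \<longleftrightarrow> {p, q} \<notin> xsum S" unfolding xsum_def by simp
  also have "\<dots> \<longleftrightarrow> even (z p q)" unfolding S(2) odd_support_iff[OF z] by simp
  finally show ?thesis by simp
qed

text \<open>Writing z as a sum of basis-cycle flows plus twice another
  circulation shows that the drift of z is divisible by every power of 2.\<close>

lemma basis_drift_zero:
  assumes B: "cycle_basis E B" and basis_zero: "\<And>C. C \<in> B \<Longrightarrow> drift d (walk_flow (cycle_of E C)) = 0"
    and z: "circulation E z"
  shows "drift d z = 0"
proof -
  have "\<forall>z. circulation E z \<longrightarrow> 2 ^ k dvd drift d z" for k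
  proof (induction k)
    case (Suc k)
    show ?case
    proof (intro allI impI)
      fix z assume z: "circulation E z"
      obtain S where S: "S \<subseteq> B" "xsum S = odd_support z"
        using cycle_basis_spans[OF B odd_support_even[OF z]] by blast
      have SC: "C \<in> cycle_family E" if "C \<in> S" for C
        using cycle_basis_family[OF B] S(1) that by blast
      define y where "y p q = (\<Sum>C\<in>S. walk_flow (cycle_of E C) p q)" for p q
      have y: "circulation E y" unfolding y_def
        by (intro circulation_sum ballI walk_flow_circulation cycle_closed_walk cycle_of(1) SC)
      have "drift d y = 0" unfolding y_def drift_sum using S(1) basis_zero by (simp add: subset_iff)
      define w where "w p q = (z p q - y p q) div 2" for p q
      have ev: "even (z p q - y p q)" for p q
        unfolding y_def by (rule basis_flow_parity[OF B z S])
      have "circulation E w" unfolding w_def by (rule half_circulation[OF z y ev])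
      then have "2 ^ k dvd drift d w" using Suc.IH by blast
      have "z p q = y p q + 2 * w p q" for p q unfolding w_def using ev[of p q] by simp
      then have "drift d z = drift d y + 2 * drift d w"
        unfolding drift_def by (simp add: sum.distrib sum_distrib_left distrib_right mult.assoc)
      moreover note \<open>2 ^ k dvd drift d w\<close>
      ultimately show "2 ^ Suc k dvd drift d z" using \<open>drift d y = 0\<close> by simp
    qed
  qed simp
  then show ?thesis using z pow2_dvd_zero by blast
qed

end

lemma WU_i_iff:
  assumes "3 \<le> K"
  shows "WU_i E K R c \<longleftrightarrow>
    (\<forall>p. R (c p) \<in> ring_set K) \<and> (\<forall>p q. E p q \<longrightarrow> ring_adj K (R (c p)) (R (c q)))"
  using ring_dist_le1_iff[OF assms] unfolding WU_i_def by blast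

lemma WU_i_locally_correct:
  assumes "3 \<le> K" "WU_i E K R c"
  shows "LocallyCorrect E K R c p"
  using assms unfolding WU_i_iff[OF assms(1)] LocallyCorrect_def ring_adj_def by force

lemma WU_i_preserved:
  assumes K: "3 \<le> K" and sym: "\<forall>p q. E p q \<longrightarrow> E q p" and W: "WU_i E K R c"
    and moves: "\<And>p. R (c' p) = R (c p) \<or> (R (c' p) = phi K (R (c p)) \<and> NormalStepR E K R c p)"
  shows "WU_i E K R c'"
proof -
  have ring: "R (c p) \<in> ring_set K" for p using W unfolding WU_i_iff[OF K] by blast
  have adj: "ring_adj K (R (c p)) (R (c q))" if "E p q" for p q
    using W that unfolding WU_i_iff[OF K] by blast
  have "R (c' p) \<in> ring_set K" for p using moves[of p] ring[of p] phi_in_ring by metis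
  moreover have "ring_adj K (R (c' p)) (R (c' q))" if e: "E p q" for p q
  proof (rule ring_adj_preserved[OF K ring adj[OF e]])
    show "R (c' p) = R (c p) \<or> (R (c' p) = phi K (R (c p)) \<and>
            (R (c q) = R (c p) \<or> R (c q) = phi K (R (c p))))"
      using moves[of p] e unfolding NormalStepR_def by blast
    show "R (c' q) = R (c q) \<or> (R (c' q) = phi K (R (c q)) \<and>
            (R (c p) = R (c q) \<or> R (c p) = phi K (R (c q))))"
      using moves[of q] e sym unfolding NormalStepR_def by blast
  qed
  ultimately show ?thesis unfolding WU_i_iff[OF K] by blast
qed

section \<open>The algorithm started in weak unison\<close>

locale clock_alg = ugraph E for E :: "'v::finite \<Rightarrow> 'v \<Rightarrow> bool" +
  fixes P :: "('v, 's) alg"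
  assumes gE: "gE P = E" and K1: "3 \<le> k1 P" and K2: "3 \<le> k2 P"
begin

text \<open>In weak unison no clock lies in a tail and every process is locally correct for both
  clocks, so the only action that can be enabled is the normal action NA.\<close>

lemma WU_only_NA:
  assumes W: "WU P c" and en: "enabled P c p a"
  shows "a = NA"
proof -
  have W1: "WU_i E (k1 P) r1 c" and W2: "WU_i E (k2 P) r2 c" using W gE unfolding WU_def by auto
  have "0 \<le> r1 (c p)" "0 \<le> r2 (c p)"
    using W1 W2 unfolding WU_i_def ring_set_iff by blast+
  moreover have "LocallyCorrect E (k1 P) r1 c p" "LocallyCorrect E (k2 P) r2 c p"
    using WU_i_locally_correct[OF K1 W1] WU_i_locally_correct[OF K2 W2] by blast+
  ultimately show ?thesis
    using en gE unfolding enabled_def ConvergenceStep_def ResetInit_def tlS_set_def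
    by (cases a) auto
qed

lemma NA_clocks:
  "r1 (result P c p NA) = phi (k1 P) (r1 (c p))"
  "r2 (result P c p NA) = r2 (c p) \<or>
   (r2 (result P c p NA) = phi (k2 P) (r2 (c p)) \<and> NormalStepR E (k2 P) r2 c p)"
  unfolding result_def Let_def gE by simp_all

lemma WU_step_moves:
  assumes W: "WU P c" and st: "step P c \<sigma> c'" and chosen: "\<sigma> p \<noteq> None"
  shows "\<sigma> p = Some NA" "NormalStepR E (k1 P) r1 c p" "r1 (c' p) = phi (k1 P) (r1 (c p))"
    "r2 (c' p) = r2 (c p) \<or> (r2 (c' p) = phi (k2 P) (r2 (c p)) \<and> NormalStepR E (k2 P) r2 c p)"
proof -
  obtain a where a: "\<sigma> p = Some a" using chosen by blast
  moreover have "case \<sigma> p of None \<Rightarrow> c' p = c p | Some a \<Rightarrow> enabled P c p a \<and> c' p = result P c p a"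
    using st unfolding step_def by blast
  ultimately have en: "enabled P c p a" and res: "c' p = result P c p a" by simp_all
  then show "\<sigma> p = Some NA" using a WU_only_NA[OF W en] by simp
  show "NormalStepR E (k1 P) r1 c p"
    using en WU_only_NA[OF W en] gE unfolding enabled_def NormalStep_def by simp
  show "r1 (c' p) = phi (k1 P) (r1 (c p))"
    "r2 (c' p) = r2 (c p) \<or> (r2 (c' p) = phi (k2 P) (r2 (c p)) \<and> NormalStepR E (k2 P) r2 c p)"
    using res NA_clocks WU_only_NA[OF W en] by simp_all
qed

lemma step_idle:
  assumes "step P c \<sigma> c'" "\<sigma> p = None"
  shows "c' p = c p"
proof -
  have "case \<sigma> p of None \<Rightarrow> c' p = c p | Some a \<Rightarrow> enabled P c p a \<and> c' p = result P c p a"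
    using assms(1) unfolding step_def by blast
  then show ?thesis using assms(2) by simp
qed

lemma WU_step:
  assumes W: "WU P c" and st: "step P c \<sigma> c'"
  shows "WU P c'"
proof -
  have W1: "WU_i E (k1 P) r1 c" and W2: "WU_i E (k2 P) r2 c" using W gE unfolding WU_def by auto
  have "WU_i E (k1 P) r1 c'"
    using WU_step_moves(2,3)[OF W st] step_idle[OF st]
    by (intro WU_i_preserved[OF K1 sym W1]) (metis not_None_eq)
  moreover have "WU_i E (k2 P) r2 c'"
    using WU_step_moves(4)[OF W st] step_idle[OF st]
    by (intro WU_i_preserved[OF K2 sym W2]) (metis not_None_eq)
  ultimately show ?thesis unfolding WU_def gE by simp
qed

lemma WU_execution:
  assumes "WU P (c 0)" "\<forall>i<n. step P (c i) (\<sigma> i) (c (Suc i))"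
  shows "WU P (c n)"
  using assms by (induction n) (auto intro: WU_step)

definition lift :: "('v \<Rightarrow> 's st) \<Rightarrow> 'v \<Rightarrow> 'v \<Rightarrow> int" where
  "lift c p q = ring_step (k1 P) (r1 (c p)) (r1 (c q))"

text \<open>Along a closed walk in weak unison the lifted differences sum to a multiple of K1
  (they telescope modulo K1) of absolute value at most the walk's length.\<close>

lemma lift_closed_walk:
  assumes W: "WU_i E (k1 P) r1 c" and ws: "closed_walk E ws"
  defines "S \<equiv> \<Sum>i<length ws. lift c (ws ! i) (cyc_next ws i)"
  shows "k1 P dvd S" "\<bar>S\<bar> \<le> int (length ws)"
proof -
  let ?R = "\<lambda>i. r1 (c (ws ! i))"
  have ring: "r1 (c p) \<in> ring_set (k1 P)" for p using W unfolding WU_i_iff[OF K1] by blast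
  have adj: "ring_adj (k1 P) (?R i) (r1 (c (cyc_next ws i)))" if "i < length ws" for i
    using W ws that unfolding WU_i_iff[OF K1] closed_walk_def by blast
  have "(\<Sum>i<length ws. r1 (c (cyc_next ws i)) - ?R i) = 0"
    using sum_rotate[of ?R "length ws"] unfolding cyc_next_def by (simp add: sum_subtractf)
  moreover have "k1 P dvd S - (\<Sum>i<length ws. r1 (c (cyc_next ws i)) - ?R i)"
    unfolding S_def lift_def sum_subtractf[symmetric]
    using ring_step_cong[OF ring ring adj] by (intro dvd_sum) simp
  ultimately show "k1 P dvd S" by simp
  have "\<bar>S\<bar> \<le> (\<Sum>i<length ws. \<bar>lift c (ws ! i) (cyc_next ws i)\<bar>)" unfolding S_def by (rule sum_abs)
  also have "\<dots> \<le> (\<Sum>i<length ws. 1)" unfolding lift_def ring_step_def by (intro sum_mono) simp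
  finally show "\<bar>S\<bar> \<le> int (length ws)" by simp
qed

text \<open>If moreover K1 exceeds C_G, the lifted differences sum to zero along every closed walk:
  on the cycles of a shortest cycle basis the sum is a multiple of K1 smaller than K1 in
  absolute value, and the drift lemma propagates this to all circulations.\<close>

lemma lift_closed_walk_zero:
  assumes W: "WU_i E (k1 P) r1 c" and KC: "int (C_G E) < k1 P" and ws: "closed_walk E ws"
  shows "(\<Sum>i<length ws. lift c (ws ! i) (cyc_next ws i)) = 0"
proof -
  have ring: "r1 (c p) \<in> ring_set (k1 P)" for p using W unfolding WU_i_iff[OF K1] by blast
  have antisym: "lift c q p = - lift c p q" for p q
    unfolding lift_def by (rule ring_step_antisym[OF K1 ring ring])
  have walk_drift: "drift (lift c) (walk_flow vs) = 2 * (\<Sum>i<length vs. lift c (vs ! i) (cyc_next vs i))"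
    for vs by (intro drift_walk_flow allI impI antisym)
  have small_zero: "S = 0" if "k1 P dvd S" "\<bar>S\<bar> < k1 P" for S :: int
  proof (rule ccontr)
    assume "S \<noteq> 0"
    then have "\<bar>k1 P\<bar> \<le> \<bar>S\<bar>" using dvd_imp_le_int that(1) by blast
    then show False using that(2) by linarith
  qed
  obtain B where B: "cycle_basis E B" and short: "\<forall>C\<in>B. card C \<le> C_G E"
    using short_cycle_basis by blast
  have "drift (lift c) (walk_flow (cycle_of E C)) = 0" if "C \<in> B" for C
  proof -
    let ?vs = "cycle_of E C"
    have C: "C \<in> cycle_family E" using cycle_basis_family[OF B] that by blast
    have cw: "closed_walk E ?vs" using cycle_closed_walk[OF cycle_of(1)[OF C]] .
    have "int (length ?vs) = int (card C)"
      using card_cyc_edges[OF cycle_of(1)[OF C]] cycle_of(2)[OF C] by simp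
    also have "\<dots> < k1 P" using short that KC by force
    finally show ?thesis
      unfolding walk_drift using small_zero lift_closed_walk[OF W cw] by fastforce
  qed
  then have "drift (lift c) (walk_flow ws) = 0"
    by (rule basis_drift_zero[OF B _ walk_flow_circulation[OF ws]])
  then show ?thesis unfolding walk_drift by simp
qed

text \<open>Otherwise every
  process would have a neighbour exactly one tick behind it; following these neighbours
  yields a closed walk along which every lifted difference is -1.\<close>

lemma WU_some_NA_enabled:
  assumes W: "WU P c" and KC: "int (C_G E) < k1 P"
  shows "\<exists>p. enabled P c p NA"
proof -
  have W1: "WU_i E (k1 P) r1 c" and W2: "WU_i E (k2 P) r2 c" using W gE unfolding WU_def by auto
  have ring: "r1 (c p) \<in> ring_set (k1 P)" for p using W1 unfolding WU_i_iff[OF K1] by blast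
  have behind: "\<exists>q. E p q \<and> lift c p q = -1" if idle: "\<not> NormalStepR E (k1 P) r1 c p" for p
  proof -
    obtain q where q: "E p q" "r1 (c q) \<noteq> r1 (c p)" "r1 (c q) \<noteq> phi (k1 P) (r1 (c p))"
      using idle ring[of p] unfolding NormalStepR_def by blast
    have "ring_adj (k1 P) (r1 (c p)) (r1 (c q))" using W1 q(1) unfolding WU_i_iff[OF K1] by blast
    then have "r1 (c p) = phi (k1 P) (r1 (c q))" using q(2,3) unfolding ring_adj_def by auto
    then have "lift c p q = -1" using q(3) unfolding lift_def ring_step_def by simp
    then show ?thesis using q(1) by blast
  qed
  have "\<exists>p. NormalStepR E (k1 P) r1 c p"
  proof (rule ccontr)
    assume "\<nexists>p. NormalStepR E (k1 P) r1 c p"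
    then obtain f where f: "\<And>p. E p (f p)" "\<And>p. lift c p (f p) = -1" using behind by metis
    obtain ws where ws: "closed_walk E ws" "\<forall>i<length ws. cyc_next ws i = f (ws ! i)"
      using successor_closed_walk[of E f] f(1) by blast
    have "(\<Sum>i<length ws. lift c (ws ! i) (cyc_next ws i)) = - int (length ws)"
      using ws(2) f(2) by simp
    moreover have "ws \<noteq> []" using ws(1) unfolding closed_walk_def by blast
    ultimately show False using lift_closed_walk_zero[OF W1 KC ws(1)] by simp
  qed
  then show ?thesis
    using WU_i_locally_correct[OF K2 W2] gE unfolding enabled_def NormalStep_def by auto
qed

text \<open>Along an execution in weak unison, a process whose neighbour has stopped forever moves at
  most twice more: with the neighbour's clock frozen at v, the potential 0, 1, 2 (for the
  values phi v, v and anything else) strictly decreases at each of its moves.\<close>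

lemma neighbour_eventually_idle:
  assumes W: "\<And>i. WU P (c i)" and st: "\<And>i. step P (c i) (\<sigma> i) (c (Suc i))"
    and e: "E p q" and idle: "\<forall>i\<ge>T. \<sigma> i p = None"
  shows "\<exists>T'. \<forall>i\<ge>T'. \<sigma> i q = None"
proof -
  let ?K = "k1 P"
  define v where "v = r1 (c T p)"
  have frozen: "r1 (c i p) = v" if "T \<le> i" for i
    using that
  proof (induction i rule: dec_induct)
    case (step i)
    then show ?case using step_idle[OF st] idle by simp
  qed (simp add: v_def)
  have ring_v: "v \<in> ring_set ?K" using W[of T] gE unfolding WU_def WU_i_def v_def by simp
  define pot where "pot x = (if x = phi ?K v then 0 else if x = v then 1 else 2 :: nat)" for x
  define h where "h k = pot (r1 (c (T + k) q))" for k
  have h_step: "h (Suc k) \<le> h k \<and> (\<sigma> (T + k) q \<noteq> None \<longrightarrow> h (Suc k) < h k)" for k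
  proof (cases "\<sigma> (T + k) q = None")
    case True
    then show ?thesis unfolding h_def using step_idle[OF st] by simp
  next
    case False
    let ?x = "r1 (c (T + k) q)"
    have ring_x: "?x \<in> ring_set ?K" using W[of "T + k"] gE unfolding WU_def WU_i_def by simp
    have "r1 (c (T + k) p) = ?x \<or> r1 (c (T + k) p) = phi ?K ?x"
      using WU_step_moves(2)[OF W st False] e sym unfolding NormalStepR_def by blast
    then have "v = ?x \<or> v = phi ?K ?x" using frozen[of "T + k"] by simp
    then have "pot (phi ?K ?x) < pot ?x"
      using phi_moves[OF K1 ring_v] phi_moves[OF K1 ring_x] unfolding pot_def by auto
    moreover have "h (Suc k) = pot (phi ?K ?x)"
      unfolding h_def using WU_step_moves(3)[OF W st False] by simp
    ultimately show ?thesis using False unfolding h_def by simp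
  qed
  obtain k0 where "\<forall>k\<ge>k0. \<sigma> (T + k) q = None"
    using potential_eventually_stable[of h "\<lambda>k. \<sigma> (T + k) q \<noteq> None"] h_step by blast
  then have "\<forall>i\<ge>T + k0. \<sigma> i q = None" by (metis add_le_cancel_left le_add_diff_inverse le_trans le_add1)
  then show ?thesis by blast
qed

text \<open>Otherwise, by connectivity, all processes would eventually stay idle,
  contradicting that every step chooses some process.\<close>

lemma chosen_infinitely_often:
  assumes W0: "WU P (c 0)" and st: "\<And>i. step P (c i) (\<sigma> i) (c (Suc i))"
    and connected: "\<forall>p q. E\<^sup>*\<^sup>* p q"
  shows "infinite {i. \<sigma> i p0 \<noteq> None}"
proof
  assume fin: "finite {i. \<sigma> i p0 \<noteq> None}"
  have W: "WU P (c i)" for i using WU_execution[of c i \<sigma>] W0 st by blast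
  obtain T0 where T0: "\<forall>i\<ge>T0. \<sigma> i p0 = None"
    using fin by (metis (mono_tags, lifting) finite_nat_set_iff_bounded_le mem_Collect_eq not_less_eq_eq)
  have "\<exists>T. \<forall>i\<ge>T. \<sigma> i q = None" for q
    using connected[rule_format, of p0 q]
  proof (induction rule: rtranclp_induct)
    case (step y z)
    then show ?case using neighbour_eventually_idle[of c \<sigma>, OF W st] by blast
  qed (use T0 in blast)
  then obtain Tq where Tq: "\<And>q. \<forall>i\<ge>Tq q. \<sigma> i q = None" by metis
  define T where "T = Max (range Tq)"
  have "\<sigma> T q = None" for q using Tq[of q] unfolding T_def by simp
  moreover obtain q where "\<sigma> T q \<noteq> None" using st[of T] unfolding step_def by blast
  ultimately show False by simp
qed

text \<open>Every chosen process executes NA and advances its master clock, so each process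
  does so infinitely often.\<close>

lemma NA_infinitely_often:
  assumes W0: "WU P (c 0)" and st: "\<And>i. step P (c i) (\<sigma> i) (c (Suc i))"
    and connected: "\<forall>p q. E\<^sup>*\<^sup>* p q"
  shows "infinite {i. \<sigma> i p = Some NA \<and> r1 (c (Suc i) p) = phi (k1 P) (r1 (c i p))}"
proof -
  have W: "WU P (c i)" for i using WU_execution[of c i \<sigma>] W0 st by blast
  have "{i. \<sigma> i p \<noteq> None} \<subseteq> {i. \<sigma> i p = Some NA \<and> r1 (c (Suc i) p) = phi (k1 P) (r1 (c i p))}"
    using WU_step_moves(1,3)[OF W st] by blast
  then show ?thesis using chosen_infinitely_often[OF W0 st connected] finite_subset by blast
qed

end

theorem proposition2:
  fixes E :: "'v::finite \<Rightarrow> 'v \<Rightarrow> bool"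
    and \<alpha>1 \<alpha>2 K1 K2 \<rho> :: int
    and cond cond1 :: "('v \<Rightarrow> 's st) \<Rightarrow> 'v \<Rightarrow> bool"
    and Init Comp :: "('v \<Rightarrow> 's st) \<Rightarrow> 'v \<Rightarrow> 's"
    and c0 :: "'v \<Rightarrow> 's st"
  defines "P \<equiv> \<lparr>gE = E, al1 = \<alpha>1, al2 = \<alpha>2, k1 = K1, k2 = K2, rho = \<rho>,
                 cnd = cond, cnd1 = cond1, ini = Init, cmp = Comp\<rparr>"
  assumes sym: "\<forall>p q. E p q \<longrightarrow> E q p"
    and irrefl: "\<forall>p. \<not> E p p"
    and connected: "\<forall>p q. E\<^sup>*\<^sup>* p q"
    and a1: "\<alpha>1 \<ge> 1" and a2: "\<alpha>2 \<ge> 1"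
    and K1: "K1 \<ge> 3" and K2: "K2 \<ge> 3"
    and rho: "\<rho> \<ge> 1"
    and aT1: "\<alpha>1 \<ge> int (T_G E)" and aT2: "\<alpha>2 \<ge> int (T_G E)"
    and KC1: "K1 > int (C_G E)" and KC2: "K2 > int (C_G E)"
    and init: "WU P c0"
  shows "(\<forall>n (c :: nat \<Rightarrow> 'v \<Rightarrow> 's st) \<sigma>. c 0 = c0 \<and> (\<forall>i < n. step P (c i) (\<sigma> i) (c (Suc i)))
             \<longrightarrow> (\<exists>p a. enabled P (c n) p a))
       \<and> (\<forall>(c :: nat \<Rightarrow> 'v \<Rightarrow> 's st) \<sigma>. c 0 = c0 \<and> (\<forall>i. step P (c i) (\<sigma> i) (c (Suc i)))
             \<longrightarrow> (\<forall>p. infinite {i. \<sigma> i p = Some NA \<and> r1 (c (Suc i) p) = phi K1 (r1 (c i p))}))"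
proof -
  interpret clock_alg E P
    by unfold_locales (simp_all add: P_def sym irrefl K1 K2)
  have k1P: "k1 P = K1" by (simp add: P_def)
  show ?thesis
  proof (intro conjI allI impI)
    fix n and c :: "nat \<Rightarrow> 'v \<Rightarrow> 's st" and \<sigma>
    assume "c 0 = c0 \<and> (\<forall>i<n. step P (c i) (\<sigma> i) (c (Suc i)))"
    then have "WU P (c n)" using WU_execution[of c n \<sigma>] init by simp
    then have "\<exists>p. enabled P (c n) p NA" using KC1 k1P by (intro WU_some_NA_enabled) simp_all
    then show "\<exists>p a. enabled P (c n) p a" by blast
  next
    fix c :: "nat \<Rightarrow> 'v \<Rightarrow> 's st" and \<sigma> p
    assume "c 0 = c0 \<and> (\<forall>i. step P (c i) (\<sigma> i) (c (Suc i)))"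
    then show "infinite {i. \<sigma> i p = Some NA \<and> r1 (c (Suc i) p) = phi K1 (r1 (c i p))}"
      using NA_infinitely_often[of c \<sigma>, OF _ _ connected] init k1P by simp
  qed
qed

end
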